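(* Let $T$ be a tree with $p\ge 3$ pendant vertices and let $u_1,u_2,u_3$ be three distinct pendant vertices of $T$. Let $H=\bigcup_{1\le i<j\le 3}P_{u_i,u_j}$ be the minimal subtree of $T$ containing these three vertices. If $m(T,1)\ge p-2$, then $m(H,1)\ge 1$.
   Context: $m(G,\lambda)$ denotes the multiplicity of $\lambda$ as an eigenvalue of the Laplacian matrix $L(G)=D(G)-A(G)$ (zero if not an eigenvalue). A pendant vertex has degree $1$. $P_{r,s}$ is the path in $T$ from $r$ to $s$. *)

theory Defs
  imports "Jordan_Normal_Form.Char_Poly"
begin

text \<open>Simple graphs: a finite vertex set V and a symmetric irreflexive adjacency
  relation E; only adjacencies between vertices of V are taken into account.\<close>

definition simple_graph :: "'a set \<Rightarrow> ('a \<Rightarrow> 'a \<Rightarrow> bool) \<Rightarrow> bool" where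
  "simple_graph V E \<longleftrightarrow> finite V \<and> (\<forall>u v. E u v \<longrightarrow> E v u) \<and> (\<forall>v. \<not> E v v)"

definition degree :: "'a set \<Rightarrow> ('a \<Rightarrow> 'a \<Rightarrow> bool) \<Rightarrow> 'a \<Rightarrow> nat" where
  "degree V E v = card {w \<in> V. E v w}"

definition pendant :: "'a set \<Rightarrow> ('a \<Rightarrow> 'a \<Rightarrow> bool) \<Rightarrow> 'a \<Rightarrow> bool" where
  "pendant V E v \<longleftrightarrow> v \<in> V \<and> degree V E v = 1"

definition walk :: "'a set \<Rightarrow> ('a \<Rightarrow> 'a \<Rightarrow> bool) \<Rightarrow> 'a list \<Rightarrow> bool" where
  "walk V E xs \<longleftrightarrow> xs \<noteq> [] \<and> set xs \<subseteq> V \<and> (\<forall>i. Suc i < length xs \<longrightarrow> E (xs ! i) (xs ! Suc i))"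

definition connected_graph :: "'a set \<Rightarrow> ('a \<Rightarrow> 'a \<Rightarrow> bool) \<Rightarrow> bool" where
  "connected_graph V E \<longleftrightarrow> V \<noteq> {} \<and>
     (\<forall>u\<in>V. \<forall>v\<in>V. \<exists>xs. walk V E xs \<and> hd xs = u \<and> last xs = v)"

definition has_cycle :: "'a set \<Rightarrow> ('a \<Rightarrow> 'a \<Rightarrow> bool) \<Rightarrow> bool" where
  "has_cycle V E \<longleftrightarrow> (\<exists>xs. walk V E xs \<and> length xs \<ge> 3 \<and> distinct xs \<and> E (last xs) (hd xs))"

definition is_tree :: "'a set \<Rightarrow> ('a \<Rightarrow> 'a \<Rightarrow> bool) \<Rightarrow> bool" where
  "is_tree V E \<longleftrightarrow> simple_graph V E \<and> connected_graph V E \<and> \<not> has_cycle V E"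

text \<open>Vertex set of the path P_{r,s} (in a tree the path is unique).\<close>
definition path_vertices :: "'a set \<Rightarrow> ('a \<Rightarrow> 'a \<Rightarrow> bool) \<Rightarrow> 'a \<Rightarrow> 'a \<Rightarrow> 'a set" where
  "path_vertices V E r s = {x. \<exists>xs. walk V E xs \<and> distinct xs \<and> hd xs = r \<and> last xs = s \<and> x \<in> set xs}"

text \<open>Laplacian matrix L = D - A of the graph induced on V (vertices ordered increasingly).\<close>
definition laplacian :: "'a::linorder set \<Rightarrow> ('a \<Rightarrow> 'a \<Rightarrow> bool) \<Rightarrow> real mat" where
  "laplacian V E = (let xs = sorted_list_of_set V in
     mat (card V) (card V) (\<lambda>(i, j).
        if i = j then real (degree V E (xs ! i))
        else if E (xs ! i) (xs ! j) then -1 else 0))"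

text \<open>m(G, lambda): multiplicity of lambda as a root of the characteristic polynomial of L(G)
  (0 if lambda is not an eigenvalue).\<close>
definition lap_mult :: "'a::linorder set \<Rightarrow> ('a \<Rightarrow> 'a \<Rightarrow> bool) \<Rightarrow> real \<Rightarrow> nat" where
  "lap_mult V E c = order c (char_poly (laplacian V E))"

end

theory Submission
  imports Defs "Jordan_Normal_Form.Jordan_Normal_Form_Uniqueness" "Jordan_Normal_Form.Jordan_Normal_Form_Existence"
begin

text \<open>Suppose \<open>m(H,1) = 0\<close> and let \<open>f\<close> be an eigenfunction of \<open>L(T)\<close> for the eigenvalue 1 that
  vanishes at the pendant vertices of \<open>T\<close> outside \<open>H\<close>. Every component of \<open>T - H\<close> hangs off \<open>H\<close>
  by a single edge; peeling it from its leaves inwards with the eigenvalue equation shows that \<open>f\<close>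
  vanishes on it and at its attachment vertex. Hence \<open>f\<close> vanishes off \<open>H\<close> and its restriction
  is an eigenfunction of \<open>L(H)\<close>, so \<open>f = 0\<close>. The 1-eigenspace of \<open>L(T)\<close> therefore injects into
  the coordinates of the \<open>p - 3\<close> pendant vertices outside \<open>H\<close>, and as \<open>L(T)\<close> is symmetric its
  dimension is \<open>m(T,1)\<close>; so \<open>m(T,1) \<le> p - 3\<close>.\<close>

lemma bij_betw_nth_sorted_list_of_set:
  "finite A \<Longrightarrow> bij_betw ((!) (sorted_list_of_set A)) {..<card A} A"
  by (rule bij_betw_nth) simp_all

lemma nth_sorted_list_of_set_mem:
  "finite A \<Longrightarrow> i < card A \<Longrightarrow> sorted_list_of_set A ! i \<in> A"
  by (metis length_sorted_list_of_set nth_mem set_sorted_list_of_set)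

lemma ex_nth_sorted_list_of_set:
  "finite A \<Longrightarrow> a \<in> A \<Longrightarrow> \<exists>i<card A. sorted_list_of_set A ! i = a"
  using in_set_conv_nth[of a "sorted_list_of_set A"] by simp

lemma sum_sorted_list_of_set:
  "finite A \<Longrightarrow> (\<Sum>i<card A. g (sorted_list_of_set A ! i)) = sum g A"
  by (rule sum.reindex_bij_betw[OF bij_betw_nth_sorted_list_of_set])

section \<open>Multiplicity of an eigenvalue of a real symmetric matrix\<close>

lemma hermitian_mult_vec_sprod:
  fixes C :: "'a::conjugatable_field mat"
  assumes C: "C \<in> carrier_mat n n"
    and herm: "\<And>i j. i < n \<Longrightarrow> j < n \<Longrightarrow> conjugate (C $$ (i, j)) = C $$ (j, i)"
    and u: "u \<in> carrier_vec n" and w: "w \<in> carrier_vec n"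
  shows "(C *\<^sub>v u) \<bullet>c w = u \<bullet>c (C *\<^sub>v w)"
proof -
  have "(C *\<^sub>v u) \<bullet>c w = (\<Sum>i<n. (\<Sum>j<n. C $$ (i, j) * u $ j) * conjugate (w $ i))"
    using C u w by (simp add: scalar_prod_def lessThan_atLeast0)
  also have "\<dots> = (\<Sum>j<n. \<Sum>i<n. u $ j * (C $$ (i, j) * conjugate (w $ i)))"
    by (subst sum.swap) (simp add: sum_distrib_left sum_distrib_right mult_ac)
  also have "\<dots> = (\<Sum>j<n. u $ j * conjugate (\<Sum>i<n. C $$ (j, i) * w $ i))"
  proof (intro sum.cong refl)
    fix j assume "j \<in> {..<n}"
    then show "(\<Sum>i<n. u $ j * (C $$ (i, j) * conjugate (w $ i))) = u $ j * conjugate (\<Sum>i<n. C $$ (j, i) * w $ i)"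
      by (simp add: sum_distrib_left sum_conjugate conjugate_dist_mul herm)
  qed
  also have "\<dots> = u \<bullet>c (C *\<^sub>v w)"
    using C u w by (simp add: scalar_prod_def lessThan_atLeast0)
  finally show ?thesis .
qed

lemma hermitian_mult_mult_vec_eq_0:
  fixes C :: "'a::conjugatable_ordered_field mat"
  assumes C: "C \<in> carrier_mat n n"
    and herm: "\<And>i j. i < n \<Longrightarrow> j < n \<Longrightarrow> conjugate (C $$ (i, j)) = C $$ (j, i)"
    and v: "v \<in> carrier_vec n" and CCv: "C *\<^sub>v (C *\<^sub>v v) = 0\<^sub>v n"
  shows "C *\<^sub>v v = 0\<^sub>v n"
proof -
  have "(C *\<^sub>v v) \<bullet>c (C *\<^sub>v v) = v \<bullet>c (C *\<^sub>v (C *\<^sub>v v))"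
    using C v by (intro hermitian_mult_vec_sprod[OF C herm]) auto
  also have "\<dots> = 0"
    using v by (simp add: CCv scalar_prod_def)
  finally show ?thesis
    using conjugate_square_eq_0_vec[OF mult_mat_vec_carrier[OF C v]] by simp
qed

lemma hermitian_mat_kernel_power:
  fixes C :: "'a::conjugatable_ordered_field mat"
  assumes C: "C \<in> carrier_mat n n"
    and herm: "\<And>i j. i < n \<Longrightarrow> j < n \<Longrightarrow> conjugate (C $$ (i, j)) = C $$ (j, i)"
  shows "mat_kernel (C ^\<^sub>m Suc k) = mat_kernel C"
proof (induction k)
  case 0
  show ?case using C by simp
next
  case (Suc k)
  have Ck: "C ^\<^sub>m Suc k \<in> carrier_mat n n" and CSk: "C ^\<^sub>m Suc (Suc k) \<in> carrier_mat n n"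
    using C by auto
  have split: "C ^\<^sub>m Suc (Suc k) *\<^sub>v v = C ^\<^sub>m Suc k *\<^sub>v (C *\<^sub>v v)" if "v \<in> carrier_vec n" for v
    using C Ck that by (simp add: assoc_mult_mat_vec)
  show ?case
  proof (rule subset_antisym)
    show "mat_kernel (C ^\<^sub>m Suc (Suc k)) \<subseteq> mat_kernel C"
    proof
      fix v assume "v \<in> mat_kernel (C ^\<^sub>m Suc (Suc k))"
      then have v: "v \<in> carrier_vec n" and "C ^\<^sub>m Suc k *\<^sub>v (C *\<^sub>v v) = 0\<^sub>v n"
        using mat_kernelD[OF CSk] split by auto
      then have "C *\<^sub>v v \<in> mat_kernel C"
        using Suc.IH mat_kernelI[OF Ck] C by auto
      then have "C *\<^sub>v (C *\<^sub>v v) = 0\<^sub>v n"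
        using mat_kernelD[OF C] by auto
      then show "v \<in> mat_kernel C"
        using hermitian_mult_mult_vec_eq_0[OF C herm v] mat_kernelI[OF C v] by auto
    qed
    show "mat_kernel C \<subseteq> mat_kernel (C ^\<^sub>m Suc (Suc k))"
      using mat_kernel_mult_subset[OF C Ck] by simp
  qed
qed

lemma order_char_poly_eq_dim_gen_eigenspace:
  fixes A :: "complex mat"
  assumes A: "A \<in> carrier_mat n n"
  shows "dim_gen_eigenspace A c (Polynomial.order c (char_poly A)) = Polynomial.order c (char_poly A)"
proof -
  obtain cs where "char_poly A = (\<Prod>a\<leftarrow>cs. [:- a, 1:])"
    using char_poly_factorized[OF A] by auto
  from jordan_nf_exists[OF A this] obtain n_as where jnf: "jordan_nf A n_as" by auto
  txt \<open>\<^term>\<open>dim_gen_eigenspace A c k\<close> sums \<open>min k\<close> over the sizes of the Jordan blocks of \<open>c\<close>.\<close>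
  have min_sum: "(\<Sum>m\<leftarrow>ms. min (sum_list ms) m) = sum_list ms" for ms :: "nat list"
  proof -
    have "sum_list ms \<le> k \<Longrightarrow> (\<Sum>m\<leftarrow>ms. min k m) = sum_list ms" for k
      by (induction ms) auto
    then show ?thesis by simp
  qed
  define ms where "ms = map fst [(m, e)\<leftarrow>n_as. e = c]"
  have "Polynomial.order c (char_poly A) = sum_list ms"
    using jordan_nf_order[OF jnf, of c] by (simp add: ms_def case_prod_beta')
  then show ?thesis
    unfolding dim_gen_eigenspace[OF jnf] by (simp add: min_sum flip: ms_def map_map)
qed

definition restrict_coords :: "nat set \<Rightarrow> 'a vec \<Rightarrow> 'a vec" where
  "restrict_coords I v = vec (card I) (\<lambda>j. v $ (sorted_list_of_set I ! j))"

lemma restrict_coords_eq_0D: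
  assumes "finite I" "restrict_coords I v = 0\<^sub>v (card I)" "i \<in> I"
  shows "v $ i = 0"
proof -
  obtain j where "j < card I" "sorted_list_of_set I ! j = i"
    using ex_nth_sorted_list_of_set[OF assms(1,3)] by blast
  then show ?thesis
    using arg_cong[OF assms(2), of "\<lambda>w. w $ j"] unfolding restrict_coords_def by simp
qed

lemma restrict_coords_minus:
  fixes v w :: "'a::ab_group_add vec"
  assumes "finite I" "I \<subseteq> {..<n}" "v \<in> carrier_vec n" "w \<in> carrier_vec n"
  shows "restrict_coords I (v - w) = restrict_coords I v - restrict_coords I w"
proof -
  have "sorted_list_of_set I ! j < n" if "j < card I" for j
    using assms(2) nth_sorted_list_of_set_mem[OF assms(1) that] by blast
  then show ?thesis
    using assms(3,4) unfolding restrict_coords_def by (intro eq_vecI) auto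
qed

lemma kernel_dim_le_card:
  fixes M :: "'a::field mat"
  assumes M: "M \<in> carrier_mat nr nc" and I: "I \<subseteq> {..<nc}"
    and vanish: "\<And>v. v \<in> mat_kernel M \<Longrightarrow> (\<forall>i\<in>I. v $ i = 0) \<Longrightarrow> v = 0\<^sub>v nc"
  shows "kernel_dim M \<le> card I"
proof -
  interpret K: kernel nr nc M by unfold_locales (rule M)
  interpret W: vec_space "TYPE('a)" "card I" .
  have "finite I" using I finite_subset by blast
  define R :: "'a vec \<Rightarrow> 'a vec" where "R = restrict_coords I"
  have RI: "R v \<in> carrier_vec (card I)" for v unfolding R_def restrict_coords_def by simp
  have K_vanish: "v = 0\<^sub>v nc" if "v \<in> mat_kernel M" "R v = 0\<^sub>v (card I)" for v
    using vanish that restrict_coords_eq_0D[OF \<open>finite I\<close>] unfolding R_def by blast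
  have K_carrier: "mat_kernel M \<subseteq> carrier_vec nc" using mat_kernel[OF M] by auto
  obtain B where "finite B" and B: "K.basis B" using kernel_basis_exists[OF M] by auto
  have BK: "B \<subseteq> mat_kernel M" and B_indpt: "\<not> K.lin_dep B"
    using B K.Ker.basis_def by auto
  have "inj_on R B"
  proof (rule inj_onI)
    fix x y assume "x \<in> B" "y \<in> B" "R x = R y"
    then have x: "x \<in> mat_kernel M" "x \<in> carrier_vec nc" and y: "y \<in> mat_kernel M" "y \<in> carrier_vec nc"
      using BK K_carrier by auto
    have "x - y \<in> mat_kernel M"
      using M x y mat_kernelD[OF M] by (intro mat_kernelI[OF M]) (auto simp: mult_minus_distrib_mat_vec)
    moreover have "R (x - y) = 0\<^sub>v (card I)"
      using \<open>R x = R y\<close> restrict_coords_minus[OF \<open>finite I\<close> I x(2) y(2)] RI unfolding R_def by simp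
    ultimately have "x - y = 0\<^sub>v nc" by (rule K_vanish)
    then show "x = y"
      using x y by (metis comm_add_vec minus_add_minus_vec minus_cancel_vec uminus_eq_vec zero_minus_vec)
  qed
  have RB: "R ` B \<subseteq> carrier_vec (card I)" using RI by auto
  have "W.lin_indpt (R ` B)"
  proof (rule W.finite_lin_indpt2[OF _ RB])
    show "finite (R ` B)" using \<open>finite B\<close> by simp
    fix a assume lc: "W.lincomb a (R ` B) = 0\<^sub>v (card I)"
    have "K.lincomb (a \<circ> R) B \<in> mat_kernel M"
      using BK by (intro K.Ker.lincomb_closed) auto
    moreover have "R (K.lincomb (a \<circ> R) B) = W.lincomb a (R ` B)"
    proof (rule eq_vecI)
      fix j assume "j < dim_vec (W.lincomb a (R ` B))"
      then have j: "j < card I" using carrier_vecD[OF W.lincomb_closed[OF RB]] by simp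
      then have idx: "sorted_list_of_set I ! j < nc"
        using I nth_sorted_list_of_set_mem[OF \<open>finite I\<close>] by blast
      have "R (K.lincomb (a \<circ> R) B) $ j = (\<Sum>b\<in>B. (a \<circ> R) b * b $ (sorted_list_of_set I ! j))"
        unfolding K.lincomb_same[OF BK] R_def restrict_coords_def using j
        by (simp add: K.NC.lincomb_index[OF idx] BK K_carrier subset_trans[OF BK K_carrier])
      also have "\<dots> = (\<Sum>w\<in>R ` B. a w * w $ j)"
        unfolding sum.reindex[OF \<open>inj_on R B\<close>] using j by (simp add: R_def restrict_coords_def)
      also have "\<dots> = W.lincomb a (R ` B) $ j"
        using W.lincomb_index[OF j RB] by simp
      finally show "R (K.lincomb (a \<circ> R) B) $ j = W.lincomb a (R ` B) $ j" .
    qed (simp add: carrier_vecD[OF RI] carrier_vecD[OF W.lincomb_closed[OF RB]])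
    ultimately have "K.lincomb (a \<circ> R) B = 0\<^sub>v nc" using lc K_vanish by simp
    then have "\<forall>b\<in>B. (a \<circ> R) b = 0"
      using B_indpt \<open>finite B\<close> unfolding K.Ker.lin_dep_def by blast
    then show "\<forall>w\<in>R ` B. a w = 0" by simp
  qed
  then have "card (R ` B) \<le> card I"
    using W.li_le_dim(2)[OF W.fin_dim RB] W.dim_is_n by simp
  then show ?thesis
    using K.Ker.dim_basis[OF \<open>finite B\<close> B] card_image[OF \<open>inj_on R B\<close>] by simp
qed

text \<open>Via the Jordan normal form over \<open>\<complex>\<close>, the multiplicity of \<open>c\<close> is the dimension of a
  generalised eigenspace, which for the Hermitian matrix \<open>A - c I\<close> is the eigenspace itself.\<close>

lemma order_char_poly_le_card_if_eigenvectors_vanish: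
  fixes A :: "real mat"
  assumes A: "A \<in> carrier_mat n n"
    and sym: "\<And>i j. i < n \<Longrightarrow> j < n \<Longrightarrow> A $$ (i, j) = A $$ (j, i)"
    and I: "I \<subseteq> {..<n}"
    and vanish: "\<And>v :: complex vec. v \<in> carrier_vec n \<Longrightarrow> of_real_hom.mat_hom A *\<^sub>v v = of_real c \<cdot>\<^sub>v v \<Longrightarrow>
      (\<forall>i\<in>I. v $ i = 0) \<Longrightarrow> v = 0\<^sub>v n"
  shows "Polynomial.order c (char_poly A) \<le> card I"
proof -
  define Ac :: "complex mat" where "Ac = of_real_hom.mat_hom A"
  define C where "C = char_matrix Ac (of_real c)"
  have Ac: "Ac \<in> carrier_mat n n" and C: "C \<in> carrier_mat n n"
    using A by (auto simp: Ac_def C_def)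
  have herm: "conjugate (C $$ (i, j)) = C $$ (j, i)" if "i < n" "j < n" for i j
    using that A sym unfolding C_def char_matrix_def Ac_def by auto
  define k where "k = Polynomial.order (of_real c) (char_poly Ac)"
  interpret of_real_poly: map_poly_inj_idom_divide_hom complex_of_real ..
  have order_eq: "Polynomial.order c (char_poly A) = k"
    unfolding k_def Ac_def of_real_hom.char_poly_hom[OF A] of_real_poly.order_hom ..
  have ker: "kernel_dim C \<le> card I"
  proof (rule kernel_dim_le_card[OF C I])
    fix v assume v: "v \<in> mat_kernel C" and "\<forall>i\<in>I. v $ i = 0"
    show "v = 0\<^sub>v n"
    proof (rule ccontr)
      assume "v \<noteq> 0\<^sub>v n"
      then have "eigenvector Ac v (of_real c)"
        using v mat_kernelD[OF C] unfolding eigenvector_char_matrix[OF Ac] C_def by auto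
      then have "v \<in> carrier_vec n" "Ac *\<^sub>v v = of_real c \<cdot>\<^sub>v v"
        using Ac unfolding eigenvector_def by auto
      then show False using vanish \<open>v \<noteq> 0\<^sub>v n\<close> \<open>\<forall>i\<in>I. v $ i = 0\<close> unfolding Ac_def by blast
    qed
  qed
  show ?thesis
  proof (cases k)
    case 0
    then show ?thesis using order_eq by simp
  next
    case (Suc k')
    have "k = dim_gen_eigenspace Ac (of_real c) k"
      using order_char_poly_eq_dim_gen_eigenspace[OF Ac] unfolding k_def by simp
    also have "\<dots> = kernel_dim (C ^\<^sub>m Suc k')"
      unfolding dim_gen_eigenspace_def C_def Suc ..
    also have "\<dots> = kernel_dim C"
    proof -
      have "mat_kernel (C ^\<^sub>m Suc k') = mat_kernel C"
        by (rule hermitian_mat_kernel_power[OF C herm])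
      moreover have "dim_col (C ^\<^sub>m Suc k') = dim_col C"
        using pow_carrier_mat[OF C, of "Suc k'"] C by (metis carrier_matD(2))
      ultimately show ?thesis unfolding kernel_dim_def by (simp only:)
    qed
    finally show ?thesis using order_eq ker by simp
  qed
qed

section \<open>The Laplacian acting on vertex functions\<close>

definition graph_laplace :: "'a set \<Rightarrow> ('a \<Rightarrow> 'a \<Rightarrow> bool) \<Rightarrow> ('a \<Rightarrow> 'b::ring_1) \<Rightarrow> 'a \<Rightarrow> 'b" where
  "graph_laplace V E f u = of_nat (degree V E u) * f u - (\<Sum>w\<in>{w\<in>V. E u w}. f w)"

definition vec_of_fun :: "'a::linorder set \<Rightarrow> ('a \<Rightarrow> 'b) \<Rightarrow> 'b vec" where
  "vec_of_fun W f = vec (card W) (\<lambda>i. f (sorted_list_of_set W ! i))"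

lemma laplacian_mult_vec_of_fun:
  fixes f :: "'a::linorder \<Rightarrow> complex"
  assumes W: "finite W" and irrefl: "\<And>v. \<not> E v v"
  shows "of_real_hom.mat_hom (laplacian W E) *\<^sub>v vec_of_fun W f = vec_of_fun W (graph_laplace W E f)"
proof (rule eq_vecI)
  define xs where "xs = sorted_list_of_set W"
  fix i assume "i < dim_vec (vec_of_fun W (graph_laplace W E f))"
  then have i: "i < card W" by (simp add: vec_of_fun_def)
  define u where "u = xs ! i"
  define g where "g w = (if w = u then of_nat (degree W E u) * f w else 0) + (- (if E u w then f w else 0))"
    for w
  have entry: "of_real (laplacian W E $$ (i, j)) * f (xs ! j) = g (xs ! j)" if j: "j < card W" for j
  proof -
    have "xs ! j = u \<longleftrightarrow> j = i"
      using W i j unfolding u_def xs_def by (simp add: nth_eq_iff_index_eq)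
    then show ?thesis
      using i j irrefl unfolding laplacian_def Let_def xs_def u_def g_def by auto
  qed
  have "(of_real_hom.mat_hom (laplacian W E) *\<^sub>v vec_of_fun W f) $ i
      = (\<Sum>j<card W. of_real (laplacian W E $$ (i, j)) * f (xs ! j))"
    using i unfolding laplacian_def Let_def vec_of_fun_def xs_def
    by (simp add: scalar_prod_def row_def lessThan_atLeast0)
  also have "\<dots> = (\<Sum>j<card W. g (xs ! j))"
    using entry by simp
  also have "\<dots> = sum g W"
    unfolding xs_def by (rule sum_sorted_list_of_set[OF W])
  also have "\<dots> = graph_laplace W E f u"
    using W i nth_sorted_list_of_set_mem[OF W i] unfolding graph_laplace_def g_def u_def xs_def
    by (simp add: sum_subtractf sum.inter_filter)
  finally show "(of_real_hom.mat_hom (laplacian W E) *\<^sub>v vec_of_fun W f) $ i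
      = vec_of_fun W (graph_laplace W E f) $ i"
    using i unfolding vec_of_fun_def u_def xs_def by simp
qed (simp add: vec_of_fun_def laplacian_def Let_def)

lemma vec_of_fun_eq_iff:
  assumes "finite W"
  shows "vec_of_fun W f = vec_of_fun W g \<longleftrightarrow> (\<forall>w\<in>W. f w = g w)"
proof
  assume eq: "vec_of_fun W f = vec_of_fun W g"
  show "\<forall>w\<in>W. f w = g w"
  proof
    fix w assume "w \<in> W"
    then obtain i where "i < card W" "sorted_list_of_set W ! i = w"
      using ex_nth_sorted_list_of_set[OF assms] by blast
    then show "f w = g w"
      using arg_cong[OF eq, of "\<lambda>v. v $ i"] unfolding vec_of_fun_def by simp
  qed
next
  assume "\<forall>w\<in>W. f w = g w"
  then show "vec_of_fun W f = vec_of_fun W g"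
    using assms nth_sorted_list_of_set_mem unfolding vec_of_fun_def by (intro eq_vecI) auto
qed

lemma vec_of_fun_surj:
  assumes "finite W" and "v \<in> carrier_vec (card W)"
  obtains f where "v = vec_of_fun W f"
proof
  define xs where "xs = sorted_list_of_set W"
  have "inj_on ((!) xs) {..<card W}"
    using bij_betw_nth_sorted_list_of_set[OF assms(1)] unfolding xs_def by (rule bij_betw_imp_inj_on)
  then show "v = vec_of_fun W (\<lambda>w. v $ the_inv_into {..<card W} ((!) xs) w)"
    using assms(2) unfolding vec_of_fun_def xs_def by (intro eq_vecI) (auto simp: the_inv_into_f_f)
qed

lemma smult_vec_of_fun: "a \<cdot>\<^sub>v vec_of_fun W f = vec_of_fun W (\<lambda>w. a * f w)"
  unfolding vec_of_fun_def by auto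

lemma zero_vec_of_fun: "0\<^sub>v (card W) = vec_of_fun W (\<lambda>w. 0)"
  unfolding vec_of_fun_def by auto

lemma lap_mult_le_card_if_eigenfunctions_vanish:
  fixes S :: "'a::linorder set"
  assumes graph: "simple_graph W E" and S: "S \<subseteq> W"
    and vanish: "\<And>f :: 'a \<Rightarrow> complex. \<forall>u\<in>W. graph_laplace W E f u = of_real c * f u \<Longrightarrow>
      \<forall>s\<in>S. f s = 0 \<Longrightarrow> \<forall>u\<in>W. f u = 0"
  shows "lap_mult W E c \<le> card S"
proof -
  have W: "finite W" and sym: "\<And>u v. E u v \<Longrightarrow> E v u" and irrefl: "\<And>v. \<not> E v v"
    using graph unfolding simple_graph_def by auto
  define xs where "xs = sorted_list_of_set W"
  define I where "I = {i. i < card W \<and> xs ! i \<in> S}"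
  have bij: "bij_betw ((!) xs) {..<card W} W"
    using bij_betw_nth_sorted_list_of_set[OF W] unfolding xs_def .
  have bij_I: "bij_betw ((!) xs) I S"
  proof (rule bij_betw_imageI)
    show "inj_on ((!) xs) I"
      using bij unfolding bij_betw_def I_def by (auto intro: inj_on_subset)
    show "(!) xs ` I = S"
      using bij S unfolding bij_betw_def I_def by force
  qed
  have card_I: "card I = card S" using bij_I by (rule bij_betw_same_card)
  have "Polynomial.order c (char_poly (laplacian W E)) \<le> card I"
  proof (rule order_char_poly_le_card_if_eigenvectors_vanish)
    show "laplacian W E \<in> carrier_mat (card W) (card W)"
      unfolding laplacian_def Let_def by simp
    show "\<And>i j. i < card W \<Longrightarrow> j < card W \<Longrightarrow> laplacian W E $$ (i, j) = laplacian W E $$ (j, i)"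
      using sym unfolding laplacian_def Let_def by auto
    show "I \<subseteq> {..<card W}" unfolding I_def by auto
    fix v :: "complex vec"
    assume v: "v \<in> carrier_vec (card W)"
      and eigen: "of_real_hom.mat_hom (laplacian W E) *\<^sub>v v = of_real c \<cdot>\<^sub>v v"
      and zero_on_I: "\<forall>i\<in>I. v $ i = 0"
    obtain f where f: "v = vec_of_fun W f" using vec_of_fun_surj[OF W v] .
    have "\<forall>u\<in>W. graph_laplace W E f u = of_real c * f u"
      using eigen unfolding f laplacian_mult_vec_of_fun[OF W irrefl] smult_vec_of_fun vec_of_fun_eq_iff[OF W] .
    moreover have "\<forall>s\<in>S. f s = 0"
    proof -
      have "f (xs ! i) = 0" if "i \<in> I" for i
        using zero_on_I that unfolding f vec_of_fun_def I_def xs_def by auto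
      then show ?thesis using bij_betw_imp_surj_on[OF bij_I] by auto
    qed
    ultimately show "v = 0\<^sub>v (card W)"
      using vanish unfolding f zero_vec_of_fun vec_of_fun_eq_iff[OF W] by blast
  qed
  then show ?thesis unfolding lap_mult_def card_I .
qed

lemma lap_mult_eq_0_imp_eigenfunction_eq_0:
  fixes f :: "'a::linorder \<Rightarrow> complex"
  assumes graph: "simple_graph W E" and mult: "lap_mult W E c = 0"
    and eigen: "\<forall>u\<in>W. graph_laplace W E f u = of_real c * f u"
  shows "\<forall>u\<in>W. f u = 0"
proof (rule ccontr)
  assume nonzero: "\<not> (\<forall>u\<in>W. f u = 0)"
  have W: "finite W" and irrefl: "\<And>v. \<not> E v v"
    using graph unfolding simple_graph_def by auto
  define L where "L = laplacian W E"
  define Lc :: "complex mat" where "Lc = of_real_hom.mat_hom L"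
  have L: "L \<in> carrier_mat (card W) (card W)" and Lc: "Lc \<in> carrier_mat (card W) (card W)"
    unfolding Lc_def L_def laplacian_def Let_def by simp_all
  have "eigenvector Lc (vec_of_fun W f) (of_real c)"
    unfolding eigenvector_def Lc_def L_def laplacian_mult_vec_of_fun[OF W irrefl] smult_vec_of_fun
    using eigen nonzero
    by (simp add: vec_of_fun_eq_iff[OF W] zero_vec_of_fun laplacian_def Let_def)
       (simp add: vec_of_fun_def)
  then have "poly (char_poly Lc) (of_real c) = 0"
    using eigenvalue_root_char_poly[OF Lc] unfolding eigenvalue_def by auto
  then have "poly (char_poly L) c = 0"
    unfolding Lc_def of_real_hom.char_poly_hom[OF L] of_real_hom.poly_map_poly by simp
  moreover have "char_poly L \<noteq> 0"
    using degree_monic_char_poly[OF L] by auto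
  ultimately have "Polynomial.order c (char_poly L) \<noteq> 0"
    using order_root by blast
  then show False using mult unfolding lap_mult_def L_def by simp
qed

section \<open>Walks and connected subgraphs\<close>

lemma walk_iff: "walk V E xs \<longleftrightarrow> xs \<noteq> [] \<and> set xs \<subseteq> V \<and> successively E xs"
  by (simp add: walk_def successively_conv_nth)

lemma walk_singleton [simp]: "walk V E [x] \<longleftrightarrow> x \<in> V"
  by (simp add: walk_iff)

lemma walk_Cons_Cons: "walk V E (x # y # ys) \<longleftrightarrow> x \<in> V \<and> E x y \<and> walk V E (y # ys)"
  by (auto simp: walk_iff)

lemma walk_append_Cons: "walk V E (xs @ x # ys) \<longleftrightarrow> walk V E (xs @ [x]) \<and> walk V E (x # ys)"
  by (auto simp: walk_iff successively_append_iff)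

lemma walk_rev:
  assumes "\<And>u v. E u v \<Longrightarrow> E v u"
  shows "walk V E (rev xs) \<longleftrightarrow> walk V E xs"
  unfolding walk_iff set_rev successively_rev using assms by (auto elim!: successively_mono)

lemma walk_mono: "walk V E xs \<Longrightarrow> set xs \<subseteq> W \<Longrightarrow> walk W E xs"
  by (simp add: walk_iff)

lemma exists_distinct_walk:
  assumes "walk V E xs"
  shows "\<exists>ys. walk V E ys \<and> distinct ys \<and> hd ys = hd xs \<and> last ys = last xs \<and> set ys \<subseteq> set xs"
  using assms
proof (induction "length xs" arbitrary: xs rule: less_induct)
  case less
  show ?case
  proof (cases "distinct xs")
    case True
    then show ?thesis using less.prems by blast
  next
    case False
    then obtain as x bs cs where xs: "xs = as @ [x] @ bs @ [x] @ cs"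
      using not_distinct_decomp by blast
    define xs' where "xs' = as @ x # cs"
    have "walk V E (as @ [x])" "walk V E ((x # bs) @ x # cs)"
      using less.prems walk_append_Cons[of V E as x "bs @ x # cs"] unfolding xs by auto
    then have "walk V E xs'"
      using walk_append_Cons[of V E as x cs] walk_append_Cons[of V E "x # bs" x cs]
      unfolding xs'_def by simp
    moreover have "length xs' < length xs" unfolding xs xs'_def by simp
    ultimately obtain ys where "walk V E ys" "distinct ys" "hd ys = hd xs'" "last ys = last xs'"
      "set ys \<subseteq> set xs'"
      using less.hyps by blast
    moreover have "hd xs' = hd xs" unfolding xs xs'_def by (cases as) auto
    moreover have "last xs' = last xs" unfolding xs xs'_def by (cases cs) auto
    moreover have "set xs' \<subseteq> set xs" unfolding xs xs'_def by auto
    ultimately show ?thesis by (metis order_trans)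
  qed
qed

lemma path_vertices_subset: "path_vertices V E a b \<subseteq> V"
  unfolding path_vertices_def walk_iff by blast

lemma endpoints_in_path_vertices:
  assumes "connected_graph V E" "a \<in> V" "b \<in> V"
  shows "a \<in> path_vertices V E a b" "b \<in> path_vertices V E a b"
proof -
  obtain xs where "walk V E xs" "hd xs = a" "last xs = b"
    using assms unfolding connected_graph_def by blast
  then obtain ys where ys: "walk V E ys" "distinct ys" "hd ys = a" "last ys = b"
    using exists_distinct_walk by metis
  then have "a \<in> set ys" "b \<in> set ys"
    by (metis hd_in_set last_in_set walk_iff)+
  then show "a \<in> path_vertices V E a b" "b \<in> path_vertices V E a b"
    using ys unfolding path_vertices_def by blast+
qed

lemma walk_within_path_vertices:
  assumes "x \<in> path_vertices V E a b"
  shows "\<exists>xs. walk (path_vertices V E a b) E xs \<and> hd xs = a \<and> last xs = x"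
proof -
  obtain ys where ys: "walk V E ys" "distinct ys" "hd ys = a" "last ys = b" "x \<in> set ys"
    using assms unfolding path_vertices_def by blast
  have ys_P: "set ys \<subseteq> path_vertices V E a b"
    using ys unfolding path_vertices_def by blast
  obtain as bs where ys_split: "ys = as @ x # bs" using split_list[OF ys(5)] by blast
  have "walk V E (as @ [x])"
    using ys(1) walk_append_Cons[of V E as x bs] unfolding ys_split by simp
  then have "walk (path_vertices V E a b) E (as @ [x])"
    using ys_P walk_mono unfolding ys_split by fastforce
  moreover have "hd (as @ [x]) = a" using ys(3) unfolding ys_split by (cases as) auto
  ultimately show ?thesis by (intro exI[of _ "as @ [x]"]) simp
qed

lemma connected_graphI_hub:
  assumes sym: "\<And>u v. E u v \<Longrightarrow> E v u" and "a \<in> W"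
    and hub: "\<And>x. x \<in> W \<Longrightarrow> \<exists>xs. walk W E xs \<and> hd xs = a \<and> last xs = x"
  shows "connected_graph W E"
  unfolding connected_graph_def
proof (intro conjI ballI)
  show "W \<noteq> {}" using \<open>a \<in> W\<close> by blast
  fix x y assume "x \<in> W" "y \<in> W"
  obtain xs where xs: "walk W E xs" "hd xs = a" "last xs = x" using hub[OF \<open>x \<in> W\<close>] by blast
  obtain ys where ys: "walk W E ys" "hd ys = a" "last ys = y" using hub[OF \<open>y \<in> W\<close>] by blast
  obtain xs' where xs': "xs = a # xs'" using xs by (cases xs) (auto simp: walk_iff)
  obtain ys' where ys': "ys = a # ys'" using ys by (cases ys) (auto simp: walk_iff)
  have "walk W E (rev xs' @ [a])"
    using xs(1) walk_rev[OF sym, where V = W and xs = xs] unfolding xs' by simp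
  then have "walk W E (rev xs' @ a # ys')"
    using ys(1) unfolding ys' by (subst walk_append_Cons) simp
  moreover have "hd (rev xs' @ a # ys') = x"
    using xs(3) unfolding xs' by (cases xs' rule: rev_cases) auto
  moreover have "last (rev xs' @ a # ys') = y"
    using ys(3) unfolding ys' by (cases ys') auto
  ultimately show "\<exists>ws. walk W E ws \<and> hd ws = x \<and> last ws = y" by blast
qed

lemma connected_graph_path_vertices:
  assumes sym: "\<And>u v. E u v \<Longrightarrow> E v u" and "connected_graph V E" "a \<in> V" "b \<in> V"
  shows "connected_graph (path_vertices V E a b) E"
proof (rule connected_graphI_hub)
  show "\<And>u v. E u v \<Longrightarrow> E v u" by (fact sym)
  show "a \<in> path_vertices V E a b" by (rule endpoints_in_path_vertices(1)[OF assms(2-4)])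
qed (fact walk_within_path_vertices)

lemma connected_graph_Un:
  assumes sym: "\<And>u v. E u v \<Longrightarrow> E v u"
    and A: "connected_graph A E" and B: "connected_graph B E" and "a \<in> A" "a \<in> B"
  shows "connected_graph (A \<union> B) E"
proof (rule connected_graphI_hub[OF sym])
  show "a \<in> A \<union> B" using \<open>a \<in> A\<close> by blast
  fix x assume "x \<in> A \<union> B"
  then obtain xs where "walk A E xs \<or> walk B E xs" "hd xs = a" "last xs = x"
    using A B \<open>a \<in> A\<close> \<open>a \<in> B\<close> unfolding connected_graph_def by blast
  moreover have "walk (A \<union> B) E xs" if "walk A E xs \<or> walk B E xs" for xs
    using that walk_mono by (metis walk_iff le_supI1 le_supI2)
  ultimately show "\<exists>xs. walk (A \<union> B) E xs \<and> hd xs = a \<and> last xs = x" by blast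
qed

section \<open>Branches of a tree\<close>

text \<open>For an edge \<open>t s\<close> of a tree, \<open>branch V E t s\<close> is the component of \<open>T - t\<close> containing \<open>s\<close>.\<close>

definition branch :: "'a set \<Rightarrow> ('a \<Rightarrow> 'a \<Rightarrow> bool) \<Rightarrow> 'a \<Rightarrow> 'a \<Rightarrow> 'a set" where
  "branch V E t s = {v. \<exists>xs. walk V E xs \<and> hd xs = s \<and> last xs = v \<and> t \<notin> set xs}"

lemma branch_subset: "branch V E t s \<subseteq> V"
  unfolding branch_def walk_iff by (auto dest: last_in_set)

lemma self_in_branch: "s \<in> V \<Longrightarrow> s \<noteq> t \<Longrightarrow> s \<in> branch V E t s"
  unfolding branch_def by (auto intro!: exI[of _ "[s]"])

lemma not_in_branch: "t \<notin> branch V E t s"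
  unfolding branch_def walk_iff by (auto dest: last_in_set)

lemma branches_disjoint:
  assumes acyclic: "\<not> has_cycle V E" and sym: "\<And>u v. E u v \<Longrightarrow> E v u" and "E t s"
  shows "branch V E t s \<inter> branch V E s t = {}"
proof (rule ccontr)
  assume "branch V E t s \<inter> branch V E s t \<noteq> {}"
  then obtain w p1 p2 where p1: "walk V E p1" "hd p1 = s" "last p1 = w" "t \<notin> set p1"
    and p2: "walk V E p2" "hd p2 = t" "last p2 = w" "s \<notin> set p2"
    unfolding branch_def by blast
  obtain q1 where q1: "walk V E q1" "distinct q1" "hd q1 = s" "last q1 = w" "t \<notin> set q1"
    using exists_distinct_walk[OF p1(1)] p1 by blast
  obtain q2 where q2: "walk V E q2" "distinct q2" "hd q2 = t" "last q2 = w" "s \<notin> set q2"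
    using exists_distinct_walk[OF p2(1)] p2 by blast
  define r2 where "r2 = rev q2"
  have r2: "walk V E r2" "distinct r2" "hd r2 = w" "last r2 = t" "s \<notin> set r2" "r2 \<noteq> []"
    using q2 walk_rev[where E = E, OF sym] unfolding r2_def by (auto simp: hd_rev last_rev walk_iff)
  have "w \<in> set q1" "w \<in> set r2"
    using q1 r2 by (metis last_in_set walk_iff, metis hd_in_set r2(6))
  then obtain ys x zs where q1_split: "q1 = ys @ x # zs" and "x \<in> set r2"
    and ys_r2: "\<forall>y\<in>set ys. y \<notin> set r2"
    using split_list_first_prop[of q1 "\<lambda>y. y \<in> set r2"] by blast
  obtain as bs where r2_split: "r2 = as @ x # bs" using split_list[OF \<open>x \<in> set r2\<close>] by blast
  have "ys \<noteq> []" using q1(3) r2(5) \<open>x \<in> set r2\<close> unfolding q1_split by (cases ys) auto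
  have "bs \<noteq> []" using r2(4) q1(5) unfolding r2_split q1_split by (cases bs) auto
  define cyc where "cyc = ys @ x # bs"
  have "walk V E cyc"
    using q1(1) r2(1) walk_append_Cons[of V E ys x zs] walk_append_Cons[of V E as x bs]
      walk_append_Cons[of V E ys x bs]
    unfolding cyc_def q1_split r2_split by simp
  moreover have "distinct cyc"
    using q1(2) r2(2) ys_r2 unfolding cyc_def q1_split r2_split by auto
  moreover have "hd cyc = s" "last cyc = t" "length cyc \<ge> 3"
    using q1(3) r2(4) \<open>ys \<noteq> []\<close> \<open>bs \<noteq> []\<close> unfolding cyc_def q1_split r2_split
    by (cases ys; cases bs; auto)+
  ultimately have "has_cycle V E"
    unfolding has_cycle_def using \<open>E t s\<close> by metis
  then show False using acyclic by contradiction
qed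

lemma branch_mono:
  assumes graph: "simple_graph V E" and acyclic: "\<not> has_cycle V E"
    and "E t s" "E s c" "c \<noteq> t" "s \<in> V"
  shows "branch V E s c \<subseteq> branch V E t s"
proof
  have sym: "\<And>u v. E u v \<Longrightarrow> E v u" and "t \<noteq> s"
    using graph \<open>E t s\<close> unfolding simple_graph_def by auto
  fix v assume "v \<in> branch V E s c"
  then obtain xs where xs: "walk V E xs" "hd xs = c" "last xs = v" "s \<notin> set xs"
    unfolding branch_def by blast
  have "t \<notin> set xs"
  proof
    assume "t \<in> set xs"
    then obtain as bs where xs_split: "xs = as @ t # bs" using split_list by metis
    have "walk V E (as @ [t])"
      using xs(1) walk_append_Cons[of V E as t bs] unfolding xs_split by simp
    moreover have "hd (as @ [t]) = c" using xs(2) unfolding xs_split by (cases as) auto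
    ultimately have "t \<in> branch V E s c"
      using xs(4) unfolding branch_def xs_split by fastforce
    moreover have "t \<in> V" using xs(1) \<open>t \<in> set xs\<close> unfolding walk_iff by blast
    then have "t \<in> branch V E c s"
      using \<open>s \<in> V\<close> sym[OF \<open>E t s\<close>] \<open>c \<noteq> t\<close> xs(2,4) hd_in_set[of xs] walk_iff[of V E xs] xs(1)
      unfolding branch_def by (intro CollectI exI[of _ "[s, t]"]) (auto simp: walk_Cons_Cons)
    ultimately show False
      using branches_disjoint[OF acyclic sym \<open>E s c\<close>] by blast
  qed
  moreover have "walk V E (s # xs)"
    using xs(1,2) \<open>s \<in> V\<close> \<open>E s c\<close> by (cases xs) (auto simp: walk_Cons_Cons)
  ultimately show "v \<in> branch V E t s"
    using xs(1,3) \<open>t \<noteq> s\<close> unfolding branch_def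
    by (intro CollectI exI[of _ "s # xs"]) (auto simp: walk_iff)
qed

lemma branch_decompose:
  assumes "v \<in> branch V E t s" "v \<noteq> s"
  shows "\<exists>c\<in>V. E s c \<and> c \<noteq> t \<and> v \<in> branch V E s c"
proof -
  obtain xs where xs: "walk V E xs" "hd xs = s" "last xs = v" "t \<notin> set xs"
    using assms(1) unfolding branch_def by blast
  have "s \<in> set xs" using xs(1,2) hd_in_set unfolding walk_iff by blast
  then obtain as bs where xs_split: "xs = as @ s # bs" and "s \<notin> set bs"
    using split_list_last by metis
  have "bs \<noteq> []" using xs(3) assms(2) unfolding xs_split by auto
  then obtain c cs where bs: "bs = c # cs" by (cases bs) auto
  have "walk V E (s # c # cs)"
    using xs(1) walk_append_Cons[of V E as s bs] unfolding xs_split bs by simp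
  then have "c \<in> V" "E s c" "walk V E (c # cs)" by (auto simp: walk_Cons_Cons walk_iff)
  moreover have "c \<noteq> t" using xs(4) unfolding xs_split bs by auto
  moreover have "v \<in> branch V E s c"
    using \<open>walk V E (c # cs)\<close> \<open>s \<notin> set bs\<close> xs(3) unfolding branch_def xs_split bs
    by (intro CollectI exI[of _ "c # cs"]) auto
  ultimately show ?thesis by blast
qed

lemma eigenfunction_vanishes_on_branch:
  fixes f :: "'a \<Rightarrow> 'b::ring_1"
  assumes graph: "simple_graph V E" and acyclic: "\<not> has_cycle V E"
    and eigen: "\<forall>u\<in>V. graph_laplace V E f u = c * f u"
    and "E t s" "t \<in> V" "s \<in> V"
    and leaves: "\<forall>v\<in>branch V E t s. pendant V E v \<longrightarrow> f v = 0"
  shows "f t = 0 \<and> (\<forall>v\<in>branch V E t s. f v = 0)"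
  using assms(4-)
proof (induction "card (branch V E t s)" arbitrary: t s rule: less_induct)
  case less
  have fin: "finite V" and sym: "\<And>u v. E u v \<Longrightarrow> E v u" and "t \<noteq> s"
    using graph \<open>E t s\<close> unfolding simple_graph_def by auto
  define C where "C = {c \<in> V. E s c \<and> c \<noteq> t}"
  have nbrs: "{w \<in> V. E s w} = insert t C" and "t \<notin> C" "finite C"
    using less.prems(1,2) sym fin unfolding C_def by auto
  have s_branch: "s \<in> branch V E t s" using self_in_branch[OF less.prems(3)] \<open>t \<noteq> s\<close> by metis
  txt \<open>The neighbours of \<open>s\<close> other than \<open>t\<close> root smaller branches; once \<open>f\<close> vanishes on them and
    at \<open>s\<close>, the eigenvalue equation at \<open>s\<close> reduces to \<open>- f t = 0\<close>.\<close>
  have IH: "f s = 0 \<and> (\<forall>v\<in>branch V E s c. f v = 0)" if "c \<in> C" for c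
  proof -
    have c: "c \<in> V" "E s c" "c \<noteq> t" using that unfolding C_def by auto
    have sub: "branch V E s c \<subseteq> branch V E t s"
      using branch_mono[OF graph acyclic less.prems(1) c(2,3) less.prems(3)] .
    then have "branch V E s c \<subset> branch V E t s"
      using s_branch not_in_branch[of s V E c] by blast
    then have "card (branch V E s c) < card (branch V E t s)"
      using branch_subset fin by (meson psubset_card_mono rev_finite_subset)
    then show ?thesis
      using less.hyps c(2) less.prems(3) c(1) less.prems(4) sub by blast
  qed
  have f_C: "f c = 0" if "c \<in> C" for c
    using IH[OF that] self_in_branch[of c V s E] that graph unfolding C_def simple_graph_def by auto
  have f_s: "f s = 0"
  proof (cases "C = {}")
    case True
    then have "pendant V E s"
      using less.prems(3) nbrs unfolding pendant_def degree_def by simp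
    then show ?thesis using less.prems(4) s_branch by blast
  next
    case False
    then show ?thesis using IH by blast
  qed
  have "graph_laplace V E f s = - f t"
    unfolding graph_laplace_def nbrs using f_s f_C \<open>t \<notin> C\<close> \<open>finite C\<close> by simp
  then have "f t = 0" using eigen less.prems(3) f_s by simp
  moreover have "f v = 0" if v: "v \<in> branch V E t s" for v
  proof (cases "v = s")
    case False
    then obtain c where "c \<in> V" "E s c" "c \<noteq> t" "v \<in> branch V E s c"
      using branch_decompose[OF v False] by blast
    then show ?thesis using IH unfolding C_def by blast
  qed (use f_s in simp)
  ultimately show ?case by blast
qed

lemma branch_disjoint_connected_subgraph:
  assumes acyclic: "\<not> has_cycle V E" and sym: "\<And>u v. E u v \<Longrightarrow> E v u"
    and "H \<subseteq> V" and H: "connected_graph H E" and "h \<in> H" "s \<notin> H" "E h s"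
  shows "branch V E h s \<inter> H = {}"
proof -
  have "g \<in> branch V E s h" if "g \<in> H" for g
  proof -
    obtain xs where "walk H E xs" "hd xs = h" "last xs = g"
      using H \<open>h \<in> H\<close> \<open>g \<in> H\<close> unfolding connected_graph_def by blast
    moreover from this have "walk V E xs" "s \<notin> set xs"
      using \<open>H \<subseteq> V\<close> \<open>s \<notin> H\<close> walk_mono unfolding walk_iff by blast+
    ultimately show ?thesis unfolding branch_def by blast
  qed
  then show ?thesis using branches_disjoint[OF acyclic sym \<open>E h s\<close>] by blast
qed

lemma outside_vertex_in_branch:
  assumes conn: "connected_graph V E" and sym: "\<And>u v. E u v \<Longrightarrow> E v u"
    and "H \<subseteq> V" "u \<in> H" "x \<in> V" "x \<notin> H"
  shows "\<exists>h\<in>H. \<exists>s\<in>V - H. E h s \<and> x \<in> branch V E h s"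
proof -
  obtain q where q: "walk V E q" "hd q = x" "last q = u"
    using conn assms(3-5) unfolding connected_graph_def by blast
  have "u \<in> set q" using q last_in_set unfolding walk_iff by metis
  then obtain ys h zs where q_split: "q = ys @ h # zs" "h \<in> H" "\<forall>y\<in>set ys. y \<notin> H"
    using \<open>u \<in> H\<close> split_list_first_prop[of q "\<lambda>y. y \<in> H"] by blast
  have "ys \<noteq> []" using q(2) \<open>x \<notin> H\<close> q_split(1,2) by (cases ys) auto
  then obtain rs s where ys: "ys = rs @ [s]" by (cases ys rule: rev_cases) auto
  have "walk V E (rs @ [s, h])"
    using q(1) walk_append_Cons[of V E ys h zs] unfolding q_split(1) ys by simp
  then have "walk V E [s, h]" and s_walk: "walk V E (rs @ [s])"
    using walk_append_Cons[of V E rs s "[h]"] by simp_all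
  then have "s \<in> V" "E h s" using sym by (auto simp: walk_Cons_Cons)
  moreover have "walk V E (rev (rs @ [s]))"
    using s_walk walk_rev[where E = E, OF sym] by blast
  moreover have "s \<notin> H" "h \<notin> set (rev (rs @ [s]))" using q_split(2,3) unfolding ys by auto
  moreover have "last (rev (rs @ [s])) = x" using q(2) unfolding q_split(1) ys by (cases rs) auto
  ultimately show ?thesis
    using q_split(2) unfolding branch_def by fastforce
qed

lemma graph_laplace_restrict:
  assumes "finite V" "H \<subseteq> V" "h \<in> H"
    and outside: "\<forall>x\<in>V - H. f x = 0"
    and boundary: "\<exists>s\<in>V - H. E h s \<Longrightarrow> f h = 0"
  shows "graph_laplace H E f h = graph_laplace V E f h"
proof -
  have "(\<Sum>w\<in>{w\<in>V. E h w}. f w) = (\<Sum>w\<in>{w\<in>H. E h w}. f w)"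
    using assms(1,2) outside by (intro sum.mono_neutral_right) auto
  moreover have "of_nat (degree H E h) * f h = of_nat (degree V E h) * f h"
  proof (cases "\<exists>s\<in>V - H. E h s")
    case False
    then have "{w\<in>V. E h w} = {w\<in>H. E h w}" using assms(2) by auto
    then show ?thesis unfolding degree_def by simp
  qed (use boundary in simp)
  ultimately show ?thesis unfolding graph_laplace_def by simp
qed

lemma eigenfunction_restrict_to_connected_subgraph:
  fixes f :: "'a \<Rightarrow> 'b::ring_1"
  assumes tree: "is_tree V E" and "H \<subseteq> V" and H: "connected_graph H E"
    and eigen: "\<forall>u\<in>V. graph_laplace V E f u = c * f u"
    and leaves: "\<forall>v. pendant V E v \<and> v \<notin> H \<longrightarrow> f v = 0"
  shows "\<forall>x\<in>V - H. f x = 0" and "\<forall>h\<in>H. graph_laplace H E f h = c * f h"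
proof -
  have graph: "simple_graph V E" and conn: "connected_graph V E" and acyclic: "\<not> has_cycle V E"
    and sym: "\<And>u v. E u v \<Longrightarrow> E v u"
    using tree unfolding is_tree_def simple_graph_def by auto
  have attached: "f h = 0 \<and> (\<forall>v\<in>branch V E h s. f v = 0)"
    if "h \<in> H" "s \<in> V - H" "E h s" for h s
  proof (rule eigenfunction_vanishes_on_branch[OF graph acyclic eigen \<open>E h s\<close>])
    show "h \<in> V" "s \<in> V" using that \<open>H \<subseteq> V\<close> by auto
    show "\<forall>v\<in>branch V E h s. pendant V E v \<longrightarrow> f v = 0"
      using leaves branch_disjoint_connected_subgraph[OF acyclic sym \<open>H \<subseteq> V\<close> H] that by blast
  qed
  obtain u where "u \<in> H" using H unfolding connected_graph_def by blast
  show outside: "\<forall>x\<in>V - H. f x = 0"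
    using outside_vertex_in_branch[OF conn sym \<open>H \<subseteq> V\<close> \<open>u \<in> H\<close>] attached by blast
  show "\<forall>h\<in>H. graph_laplace H E f h = c * f h"
  proof
    fix h assume "h \<in> H"
    have "graph_laplace H E f h = graph_laplace V E f h"
      using graph_laplace_restrict[OF _ \<open>H \<subseteq> V\<close> \<open>h \<in> H\<close> outside] attached \<open>h \<in> H\<close> graph
      unfolding simple_graph_def by blast
    then show "graph_laplace H E f h = c * f h" using eigen \<open>h \<in> H\<close> \<open>H \<subseteq> V\<close> by auto
  qed
qed

lemma simple_graph_subset: "simple_graph V E \<Longrightarrow> H \<subseteq> V \<Longrightarrow> simple_graph H E"
  unfolding simple_graph_def using finite_subset by blast

lemma three_paths_connected_subgraph:
  assumes sym: "\<And>u v. E u v \<Longrightarrow> E v u" and conn: "connected_graph V E"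
    and "u1 \<in> V" "u2 \<in> V" "u3 \<in> V"
  defines "H \<equiv> path_vertices V E u1 u2 \<union> path_vertices V E u1 u3 \<union> path_vertices V E u2 u3"
  shows "H \<subseteq> V" "connected_graph H E" "{u1, u2, u3} \<subseteq> H"
proof -
  have P12: "connected_graph (path_vertices V E u1 u2) E" "u1 \<in> path_vertices V E u1 u2"
    "u2 \<in> path_vertices V E u1 u2"
    using connected_graph_path_vertices[OF sym conn] endpoints_in_path_vertices[OF conn] assms(3,4)
    by blast+
  have P13: "connected_graph (path_vertices V E u1 u3) E" "u1 \<in> path_vertices V E u1 u3"
    "u3 \<in> path_vertices V E u1 u3"
    using connected_graph_path_vertices[OF sym conn] endpoints_in_path_vertices[OF conn] assms(3,5)
    by blast+
  have P23: "connected_graph (path_vertices V E u2 u3) E" "u2 \<in> path_vertices V E u2 u3"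
    using connected_graph_path_vertices[OF sym conn] endpoints_in_path_vertices[OF conn] assms(4,5)
    by blast+
  show "H \<subseteq> V" unfolding H_def using path_vertices_subset[of V E] by blast
  show "{u1, u2, u3} \<subseteq> H" unfolding H_def using P12 P13 by blast
  have "connected_graph (path_vertices V E u1 u2 \<union> path_vertices V E u1 u3) E"
    using connected_graph_Un[where E = E, OF sym P12(1) P13(1) P12(2) P13(2)] .
  then show "connected_graph H E"
    unfolding H_def using connected_graph_Un[where E = E, OF sym _ P23(1) _ P23(2)] P12(3) by blast
qed

lemma lap_mult_le_card_pendants_outside:
  assumes tree: "is_tree V E" and "H \<subseteq> V" and H: "connected_graph H E"
    and H_mult: "lap_mult H E c = 0"
  shows "lap_mult V E c \<le> card {v. pendant V E v \<and> v \<notin> H}"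
proof -
  have graph: "simple_graph V E" using tree unfolding is_tree_def by blast
  show ?thesis
  proof (rule lap_mult_le_card_if_eigenfunctions_vanish[OF graph])
    show "{v. pendant V E v \<and> v \<notin> H} \<subseteq> V" unfolding pendant_def by blast
    fix f :: "'a \<Rightarrow> complex"
    assume eigen: "\<forall>u\<in>V. graph_laplace V E f u = of_real c * f u"
      and "\<forall>v\<in>{v. pendant V E v \<and> v \<notin> H}. f v = 0"
    then have "\<forall>x\<in>V - H. f x = 0" and "\<forall>h\<in>H. graph_laplace H E f h = of_real c * f h"
      using eigenfunction_restrict_to_connected_subgraph[OF tree \<open>H \<subseteq> V\<close> H eigen] by blast+
    moreover note lap_mult_eq_0_imp_eigenfunction_eq_0[OF simple_graph_subset[OF graph \<open>H \<subseteq> V\<close>] H_mult]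
    ultimately show "\<forall>u\<in>V. f u = 0" by blast
  qed
qed

theorem mainTheorem12:
  fixes V :: "'a::linorder set" and E :: "'a \<Rightarrow> 'a \<Rightarrow> bool" and u1 u2 u3 :: 'a
  assumes tree: "is_tree V E"
    and p3: "card {v. pendant V E v} \<ge> 3"
    and pend: "pendant V E u1" "pendant V E u2" "pendant V E u3"
    and dist: "u1 \<noteq> u2" "u1 \<noteq> u3" "u2 \<noteq> u3"
    and mult: "lap_mult V E 1 \<ge> card {v. pendant V E v} - 2"
  shows "lap_mult (path_vertices V E u1 u2 \<union> path_vertices V E u1 u3 \<union> path_vertices V E u2 u3) E 1 \<ge> 1"
proof -
  let ?H = "path_vertices V E u1 u2 \<union> path_vertices V E u1 u3 \<union> path_vertices V E u2 u3"
  have graph: "simple_graph V E" and conn: "connected_graph V E"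
    using tree unfolding is_tree_def by auto
  then have sym: "\<And>u v. E u v \<Longrightarrow> E v u" and "finite {v. pendant V E v}"
    unfolding simple_graph_def pendant_def by auto
  have "u1 \<in> V" "u2 \<in> V" "u3 \<in> V" using pend unfolding pendant_def by auto
  note H = three_paths_connected_subgraph[where E = E, OF sym conn this]
  have "lap_mult ?H E 1 \<noteq> 0"
  proof
    assume "lap_mult ?H E 1 = 0"
    then have "lap_mult V E 1 \<le> card {v. pendant V E v \<and> v \<notin> ?H}"
      using lap_mult_le_card_pendants_outside[OF tree H(1,2)] by simp
    also have "\<dots> \<le> card ({v. pendant V E v} - {u1, u2, u3})"
      using H(3) \<open>finite {v. pendant V E v}\<close> by (intro card_mono) auto
    also have "\<dots> = card {v. pendant V E v} - 3"
      using pend dist \<open>finite {v. pendant V E v}\<close> by (simp add: card_Diff_subset)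
    finally show False using mult p3 by linarith
  qed
  then show ?thesis by simp
qed

end
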